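(* Let $X$ be a regular space. If $t(Q_{P}(X))=\aleph_0$, then $X$ is a Lindelöf space.
   Context: A function $f\colon X\to Y$ between topological spaces is quasi-continuous at $x\in X$ if for every open $U\ni x$ and every open $V\ni f(x)$ there is a non-empty open $G\subseteq U$ with $f(G)\subseteq V$; $f$ is quasi-continuous if it is so at every point. $Q_{P}(X)$ is the set of quasi-continuous functions $X\to\mathbb{R}$ with the topology of point-wise convergence (subspace topology from $\mathbb{R}^X$). The tightness of a space $Z$ is $t(Z)=\sup_{z\in Z} t(z,Z)$, where $t(z,Z)=\aleph_0+\sup\{a(z,A): A\subseteq Z,\ z\in\overline{A}\}$ and $a(z,A)=\min\{|B|: B\subseteq A,\ z\in\overline{B}\}$. A space is Lindelöf if every open cover has a countable subcover. *)

theory Defs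
  imports "HOL-Analysis.Analysis"
begin

definition quasi_continuous_at :: "'a topology \<Rightarrow> ('a \<Rightarrow> real) \<Rightarrow> 'a \<Rightarrow> bool" where
  "quasi_continuous_at X f x \<equiv>
     \<forall>U V. openin X U \<and> x \<in> U \<and> open V \<and> f x \<in> V \<longrightarrow>
       (\<exists>G. openin X G \<and> G \<noteq> {} \<and> G \<subseteq> U \<and> f ` G \<subseteq> V)"

definition quasi_continuous :: "'a topology \<Rightarrow> ('a \<Rightarrow> real) \<Rightarrow> bool" where
  "quasi_continuous X f \<equiv> \<forall>x \<in> topspace X. quasi_continuous_at X f x"

text \<open>Q_P(X): quasi-continuous real functions on X with the topology of pointwise
  convergence, i.e. the subspace of R^X (product topology over the carrier of X;
  functions are represented extensionally, with value undefined off the carrier).\<close>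
definition QP :: "'a topology \<Rightarrow> ('a \<Rightarrow> real) topology" where
  "QP X = subtopology (product_topology (\<lambda>_. euclideanreal) (topspace X))
                      {f. quasi_continuous X f}"

definition countable_tightness :: "'b topology \<Rightarrow> bool" where
  "countable_tightness Z \<equiv>
     \<forall>z A. A \<subseteq> topspace Z \<and> z \<in> Z closure_of A \<longrightarrow>
       (\<exists>B. B \<subseteq> A \<and> countable B \<and> z \<in> Z closure_of B)"

end

theory Submission
  imports Defs
begin

text \<open>Fix an open cover \<open>\<U>\<close> of \<open>X\<close>. For an open set \<open>V\<close> whose closure is covered by
  finitely many members of \<open>\<U>\<close>, the indicator function of that closure is quasi-continuous and
  vanishes off the finite subfamily. By regularity, such \<open>V\<close> can be chosen to contain any
  prescribed finite set, so these indicators accumulate at the constant function \<open>1\<close> in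
  \<open>Q\<^sub>P(X)\<close>. Countable tightness picks countably many of them still accumulating at \<open>1\<close>; since
  every point must be non-zero for one of them, their countably many finite subfamilies cover
  \<open>X\<close>.\<close>

lemma regular_space_open_closure_of_subset:
  assumes "regular_space X" "openin X W" "x \<in> W"
  obtains U where "openin X U" "x \<in> U" "X closure_of U \<subseteq> W"
proof -
  have "neighbourhood_base_of (closedin X) X"
    using assms(1) by (simp add: neighbourhood_base_of_closedin)
  then have "\<exists>U C. openin X U \<and> closedin X C \<and> x \<in> U \<and> U \<subseteq> C \<and> C \<subseteq> W"
    using assms(2,3) unfolding neighbourhood_base_of by simp
  then obtain U C where U: "openin X U" "x \<in> U" "U \<subseteq> C" and C: "closedin X C" "C \<subseteq> W"
    by blast
  have "X closure_of U \<subseteq> C"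
    using U(3) C(1) by (rule closure_of_minimal)
  then show thesis
    using that U(1,2) C(2) by blast
qed

lemma regular_space_finite_closure_of_cover:
  assumes "regular_space X" and open_cover: "\<And>U. U \<in> \<U> \<Longrightarrow> openin X U" "topspace X \<subseteq> \<Union>\<U>"
    and "finite F" "F \<subseteq> topspace X"
  obtains V \<V> where "openin X V" "F \<subseteq> V" "finite \<V>" "\<V> \<subseteq> \<U>" "X closure_of V \<subseteq> \<Union>\<V>"
proof -
  have "\<exists>V \<V>. openin X V \<and> F \<subseteq> V \<and> finite \<V> \<and> \<V> \<subseteq> \<U> \<and> X closure_of V \<subseteq> \<Union>\<V>"
    using \<open>finite F\<close> \<open>F \<subseteq> topspace X\<close>
  proof (induction F rule: finite_induct)
    case empty
    show ?case by (intro exI[of _ "{}"]) simp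
  next
    case (insert x F)
    have x: "x \<in> topspace X" and F: "F \<subseteq> topspace X"
      using insert.prems by simp_all
    obtain V \<V> where V: "openin X V" "F \<subseteq> V" "finite \<V>" "\<V> \<subseteq> \<U>" "X closure_of V \<subseteq> \<Union>\<V>"
      using insert.IH[OF F] by blast
    obtain W where W: "W \<in> \<U>" "x \<in> W"
      using x open_cover(2) by blast
    obtain A where A: "openin X A" "x \<in> A" "X closure_of A \<subseteq> W"
      using regular_space_open_closure_of_subset[OF assms(1) open_cover(1)[OF W(1)] W(2)] .
    have "openin X (V \<union> A)"
      using V(1) A(1) by (rule openin_Un)
    moreover have "X closure_of (V \<union> A) \<subseteq> \<Union>(insert W \<V>)"
      using V(5) A(3) by auto
    ultimately show ?case
      using V(2-4) A(2) W(1) by (intro exI[of _ "V \<union> A"] exI[of _ "insert W \<V>"]) auto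
  qed
  then show thesis using that by blast
qed

lemma continuous_map_imp_quasi_continuous:
  assumes "continuous_map X euclideanreal f"
  shows "quasi_continuous X f"
  unfolding quasi_continuous_def quasi_continuous_at_def
proof (intro ballI allI impI)
  fix x U V
  assume "x \<in> topspace X" and UV: "openin X U \<and> x \<in> U \<and> open V \<and> f x \<in> V"
  then have "openin X (U \<inter> {y \<in> topspace X. f y \<in> V})"
    using assms by (simp add: openin_Int openin_continuous_map_preimage)
  moreover have "x \<in> U \<inter> {y \<in> topspace X. f y \<in> V}"
    using UV \<open>x \<in> topspace X\<close> by blast
  ultimately show "\<exists>G. openin X G \<and> G \<noteq> {} \<and> G \<subseteq> U \<and> f ` G \<subseteq> V"
    by (intro exI[of _ "U \<inter> {y \<in> topspace X. f y \<in> V}"]) auto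
qed

lemma quasi_continuous_indicator_closure_of_open:
  assumes "openin X V"
  shows "quasi_continuous X (restrict (\<lambda>x. if x \<in> X closure_of V then a else b) (topspace X))"
    (is "quasi_continuous X ?f")
  unfolding quasi_continuous_def quasi_continuous_at_def
proof (intro ballI allI impI)
  fix x U W
  assume x: "x \<in> topspace X" and UW: "openin X U \<and> x \<in> U \<and> open W \<and> ?f x \<in> W"
  then have U: "openin X U" "U \<subseteq> topspace X" "x \<in> U"
    using openin_subset by blast+
  show "\<exists>G. openin X G \<and> G \<noteq> {} \<and> G \<subseteq> U \<and> ?f ` G \<subseteq> W"
  proof (cases "x \<in> X closure_of V")
    case True
    then have "U \<inter> V \<noteq> {}"
      using U by (auto simp: in_closure_of)
    moreover have "V \<subseteq> X closure_of V"
      using assms by (simp add: closure_of_subset openin_subset)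
    then have "?f ` (U \<inter> V) \<subseteq> W"
      using True x U UW by auto
    ultimately show ?thesis
      using U(1) assms by (intro exI[of _ "U \<inter> V"]) (auto simp: openin_Int)
  next
    case False
    then have "?f ` (U - X closure_of V) \<subseteq> W"
      using x U UW by auto
    then show ?thesis
      using False U by (intro exI[of _ "U - X closure_of V"]) (auto simp: openin_diff)
  qed
qed

lemma topspace_QP: "topspace (QP X) = {f \<in> extensional (topspace X). quasi_continuous X f}"
  by (auto simp: QP_def PiE_def)

lemma continuous_map_QP_eval:
  assumes "x \<in> topspace X"
  shows "continuous_map (QP X) euclideanreal (\<lambda>f. f x)"
  unfolding QP_def
  by (rule continuous_map_from_subtopology, rule continuous_map_product_projection, fact)

lemma QP_closure_of_nonzero_at:
  assumes "g \<in> QP X closure_of B" "x \<in> topspace X" "g x \<noteq> 0"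
  obtains f where "f \<in> B" "f x \<noteq> 0"
proof -
  have "openin (QP X) {f \<in> topspace (QP X). f x \<in> - {0}}"
    by (rule openin_continuous_map_preimage[OF continuous_map_QP_eval[OF assms(2)]]) auto
  moreover have "g \<in> {f \<in> topspace (QP X). f x \<in> - {0}}"
    using assms(1,3) in_closure_of by fastforce
  ultimately obtain f where "f \<in> B" "f \<in> {f \<in> topspace (QP X). f x \<in> - {0}}"
    using assms(1) unfolding in_closure_of by meson
  then show thesis
    using that by simp
qed

definition QP_vanishing_off_finite_subfamily :: "'a topology \<Rightarrow> 'a set set \<Rightarrow> ('a \<Rightarrow> real) set"
  where "QP_vanishing_off_finite_subfamily X \<U> =
    {f \<in> topspace (QP X). \<exists>\<V>. finite \<V> \<and> \<V> \<subseteq> \<U> \<and> (\<forall>x \<in> topspace X - \<Union>\<V>. f x = 0)}"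

lemma QP_const_one_in_closure_of_vanishing_off_finite_subfamily:
  assumes "regular_space X" "\<And>U. U \<in> \<U> \<Longrightarrow> openin X U" "topspace X \<subseteq> \<Union>\<U>"
  shows "restrict (\<lambda>_. 1) (topspace X) \<in> QP X closure_of QP_vanishing_off_finite_subfamily X \<U>"
    (is "?one \<in> QP X closure_of ?A")
  unfolding in_closure_of
proof (intro conjI allI impI)
  have "continuous_map X euclideanreal (\<lambda>_. 1)"
    by simp
  then have "continuous_map X euclideanreal ?one"
    by (rule continuous_map_eq) simp
  then show "?one \<in> topspace (QP X)"
    by (simp add: topspace_QP continuous_map_imp_quasi_continuous)
  fix T
  assume T: "?one \<in> T \<and> openin (QP X) T"
  then obtain T' where T': "openin (product_topology (\<lambda>_. euclideanreal) (topspace X)) T'"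
      "T = T' \<inter> {f. quasi_continuous X f}"
    unfolding QP_def openin_subtopology by blast
  then obtain W where W: "finite {i \<in> topspace X. W i \<noteq> UNIV}"
      "?one \<in> PiE (topspace X) W" "PiE (topspace X) W \<subseteq> T'"
    using T unfolding openin_product_topology_alt by force
  text \<open>Only the finitely many constrained coordinates matter; put them inside \<open>V\<close>.\<close>
  obtain V \<V> where V: "openin X V" "{i \<in> topspace X. W i \<noteq> UNIV} \<subseteq> V" "finite \<V>"
      "\<V> \<subseteq> \<U>" "X closure_of V \<subseteq> \<Union>\<V>"
    using regular_space_finite_closure_of_cover[OF assms W(1)] by blast
  define f where "f = restrict (\<lambda>x. if x \<in> X closure_of V then 1 else 0::real) (topspace X)"
  have qc: "quasi_continuous X f"
    unfolding f_def by (rule quasi_continuous_indicator_closure_of_open[OF V(1)])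
  have "V \<subseteq> X closure_of V"
    using V(1) by (simp add: closure_of_subset openin_subset)
  then have "f \<in> PiE (topspace X) W"
    using V(2) W(2) by (force simp: f_def PiE_iff)
  then have "f \<in> T"
    using T' W(3) qc by blast
  moreover have "f \<in> ?A"
    using qc V(3-5) unfolding QP_vanishing_off_finite_subfamily_def
    by (auto simp: f_def topspace_QP intro!: exI[of _ \<V>])
  ultimately show "\<exists>f. f \<in> ?A \<and> f \<in> T"
    by blast
qed

lemma countable_subcover_of_QP_closure_of_vanishing:
  assumes "B \<subseteq> QP_vanishing_off_finite_subfamily X \<U>" "countable B"
    and "restrict (\<lambda>_. 1) (topspace X) \<in> QP X closure_of B"
  obtains \<V> where "countable \<V>" "\<V> \<subseteq> \<U>" "topspace X \<subseteq> \<Union>\<V>"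
proof -
  have "\<forall>f \<in> B. \<exists>\<V>. finite \<V> \<and> \<V> \<subseteq> \<U> \<and> (\<forall>x \<in> topspace X - \<Union>\<V>. f x = 0)"
    using assms(1) unfolding QP_vanishing_off_finite_subfamily_def by blast
  then obtain \<S> where \<S>: "\<And>f. f \<in> B \<Longrightarrow>
      finite (\<S> f) \<and> \<S> f \<subseteq> \<U> \<and> (\<forall>x \<in> topspace X - \<Union>(\<S> f). f x = 0)"
    by metis
  have "countable (\<Union>(\<S> ` B))"
    using assms(2) by (rule countable_UN) (simp add: \<S> countable_finite)
  moreover have "\<Union>(\<S> ` B) \<subseteq> \<U>"
    using \<S> by blast
  moreover have "topspace X \<subseteq> \<Union>(\<Union>(\<S> ` B))"
  proof
    fix x
    assume x: "x \<in> topspace X"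
    then have "restrict (\<lambda>_. 1) (topspace X) x \<noteq> (0::real)"
      by simp
    then obtain f where f: "f \<in> B" "f x \<noteq> 0"
      by (rule QP_closure_of_nonzero_at[OF assms(3) x])
    then have "x \<in> \<Union>(\<S> f)"
      using \<S>[OF f(1)] x by blast
    then show "x \<in> \<Union>(\<Union>(\<S> ` B))"
      using f(1) by blast
  qed
  ultimately show thesis
    by (rule that)
qed

theorem mainTheorem3:
  fixes X :: "'a topology"
  assumes "regular_space X" and "t1_space X"
    and "countable_tightness (QP X)"
  shows "Lindelof_space X"
  unfolding Lindelof_space_def
proof (intro allI impI)
  fix \<U>
  assume "(\<forall>U\<in>\<U>. openin X U) \<and> \<Union>\<U> = topspace X"
  then have opens: "\<And>U. U \<in> \<U> \<Longrightarrow> openin X U" and cover: "\<Union>\<U> = topspace X"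
    by auto
  have "restrict (\<lambda>_. 1) (topspace X) \<in> QP X closure_of QP_vanishing_off_finite_subfamily X \<U>"
    using assms(1) opens cover[THEN equalityD2]
    by (rule QP_const_one_in_closure_of_vanishing_off_finite_subfamily)
  moreover have "QP_vanishing_off_finite_subfamily X \<U> \<subseteq> topspace (QP X)"
    unfolding QP_vanishing_off_finite_subfamily_def by blast
  ultimately obtain B where "B \<subseteq> QP_vanishing_off_finite_subfamily X \<U>" "countable B"
      "restrict (\<lambda>_. 1) (topspace X) \<in> QP X closure_of B"
    using assms(3) unfolding countable_tightness_def by meson
  then obtain \<V> where \<V>: "countable \<V>" "\<V> \<subseteq> \<U>" "topspace X \<subseteq> \<Union>\<V>"
    by (rule countable_subcover_of_QP_closure_of_vanishing)
  moreover have "\<Union>\<V> \<subseteq> topspace X"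
    using \<V>(2) cover by auto
  ultimately show "\<exists>\<V>. countable \<V> \<and> \<V> \<subseteq> \<U> \<and> \<Union>\<V> = topspace X"
    by auto
qed

end
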